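(* Let $T\ge 1$, $\ell\ge 0$ and $N\ge 1$ be integers. There exists a $(T,N,1)$-tropical code within maximum delay $\ell$ if and only if $N\le(\ell+2)^T-(\ell+1)^T$.
   Context: Tropical arithmetic on $\mathbb{R}\cup\{\infty\}$: $x\oplus y=\min(x,y)$, $x\odot y=x+y$, with $x\oplus\infty=x$ and $x\odot\infty=\infty$. For a matrix $S$ with $T$ rows and $N$ columns and a column vector $\mathbf{x}$ of length $N$, $S\odot\mathbf{x}$ is the vector whose $t$-th entry is $\min_{j}(S_{tj}+x_j)$. A $(T,N,D)$-tropical code is a matrix $S\in(\{0\}\cup\mathbb{N}\cup\{\infty\})^{T\times N}$ such that for any two distinct vectors $\mathbf{x},\mathbf{y}\in(\{0\}\cup\mathbb{N}\cup\{\infty\})^{N}$, each having at most $D$ finite entries, $S\odot\mathbf{x}\ne S\odot\mathbf{y}$. It is within maximum delay $\ell$ if $S\in\{0,1,\dots,\ell,\infty\}^{T\times N}$. *)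

theory Defs
  imports Main "HOL-Library.Extended_Nat"
begin

text \<open>Tropical values: {0} \<union> \<nat> \<union> {\<infinity>} is modelled by enat.
  Tropical addition is min, tropical multiplication is +, which on enat
  satisfies x + \<infinity> = \<infinity>.  A T\<times>N matrix is a function nat \<Rightarrow> nat \<Rightarrow> enat
  whose relevant entries are those with t < T, j < N; a vector of length N
  is a function nat \<Rightarrow> enat whose relevant entries are those with j < N.\<close>

definition trop_mult_vec :: "nat \<Rightarrow> (nat \<Rightarrow> nat \<Rightarrow> enat) \<Rightarrow> (nat \<Rightarrow> enat) \<Rightarrow> nat \<Rightarrow> enat" where
  "trop_mult_vec N S x t = Min ((\<lambda>j. S t j + x j) ` {..<N})"

definition sparse_vecs :: "nat \<Rightarrow> nat \<Rightarrow> (nat \<Rightarrow> enat) set" where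
  "sparse_vecs N D = {x. (\<forall>j\<ge>N. x j = \<infinity>) \<and> card {j. j < N \<and> x j \<noteq> \<infinity>} \<le> D}"

definition tropical_code :: "nat \<Rightarrow> nat \<Rightarrow> nat \<Rightarrow> (nat \<Rightarrow> nat \<Rightarrow> enat) \<Rightarrow> bool" where
  "tropical_code T N D S \<longleftrightarrow>
     (\<forall>x\<in>sparse_vecs N D. \<forall>y\<in>sparse_vecs N D. x \<noteq> y \<longrightarrow>
        (\<exists>t<T. trop_mult_vec N S x t \<noteq> trop_mult_vec N S y t))"

definition within_delay :: "nat \<Rightarrow> nat \<Rightarrow> nat \<Rightarrow> (nat \<Rightarrow> nat \<Rightarrow> enat) \<Rightarrow> bool" where
  "within_delay T N l S \<longleftrightarrow>
     (\<forall>t<T. \<forall>j<N. S t j = \<infinity> \<or> S t j \<le> enat l)"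

end

theory Submission
  imports Defs "HOL-Library.FuncSet"
begin

text \<open>Subtracting from each column j of S its minimum entry m_j turns it into a vector over
  {0,...,l,\<infinity>} with at least one zero entry; there are (l+2)^T - (l+1)^T such vectors.
  If columns j and j' had the same normalisation, the inputs with the single finite entry
  m_j' in position j, resp. m_j in position j', would give the same output; this gives
  the upper bound on N.  Conversely, any N distinct normalised columns form a code:
  the input value a in position k is recovered as the minimum of the output, since the
  column has a zero entry, and then the column itself, hence k.\<close>

definition trop_unit :: "nat \<Rightarrow> nat \<Rightarrow> nat \<Rightarrow> enat" where
  "trop_unit k a = (\<lambda>_. \<infinity>)(k := enat a)"

lemma trop_unit_in_sparse_vecs:
  assumes k: "k < N"
  shows "trop_unit k a \<in> sparse_vecs N 1"
proof -
  have "{j. j < N \<and> trop_unit k a j \<noteq> \<infinity>} = {k}" using k by (auto simp: trop_unit_def)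
  thus ?thesis using k by (auto simp: sparse_vecs_def trop_unit_def)
qed

lemma infty_in_sparse_vecs: "(\<lambda>_. \<infinity>) \<in> sparse_vecs N D"
  by (simp add: sparse_vecs_def)

lemma sparse_vecs_one_cases:
  assumes "x \<in> sparse_vecs N 1"
  obtains "x = (\<lambda>_. \<infinity>)" | k a where "k < N" "x = trop_unit k a"
proof -
  let ?F = "{j. j < N \<and> x j \<noteq> \<infinity>}"
  have card_F: "card ?F \<le> 1" and outside: "\<forall>j\<ge>N. x j = \<infinity>"
    using assms by (auto simp: sparse_vecs_def)
  show thesis
  proof (cases "card ?F = 0")
    case True
    then have "?F = {}" by simp
    then have "x = (\<lambda>_. \<infinity>)"
      using outside by (metis (mono_tags, lifting) empty_Collect_eq linorder_not_le)
    thus thesis by (rule that(1))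
  next
    case False
    then have "card ?F = 1" using card_F by linarith
    then obtain k where k: "?F = {k}" by (auto simp: card_Suc_eq)
    then obtain a where a: "x k = enat a" by auto
    have "x = trop_unit k a"
    proof
      fix j
      show "x j = trop_unit k a j"
        using k outside a by (cases "j = k"; cases "j < N") (auto simp: trop_unit_def)
    qed
    moreover have "k < N" using k by auto
    ultimately show thesis using that(2) by blast
  qed
qed

lemma trop_mult_vec_unit: "k < N \<Longrightarrow> trop_mult_vec N S (trop_unit k a) t = S t k + enat a"
  unfolding trop_mult_vec_def by (rule Min_eqI) (auto simp: trop_unit_def)

lemma trop_mult_vec_infty: "N \<ge> 1 \<Longrightarrow> trop_mult_vec N S (\<lambda>_. \<infinity>) t = \<infinity>"
  unfolding trop_mult_vec_def by (rule Min_eqI) (auto simp: image_iff intro!: exI[of _ 0])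

definition delay_values :: "nat \<Rightarrow> enat set" where
  "delay_values l = insert \<infinity> (enat ` {..l})"

lemma mem_delay_values: "c \<in> delay_values l \<longleftrightarrow> c = \<infinity> \<or> c \<le> enat l"
  by (cases c) (auto simp: delay_values_def)

definition normalized_columns :: "nat \<Rightarrow> nat \<Rightarrow> (nat \<Rightarrow> enat) set" where
  "normalized_columns T l = {c \<in> Pi\<^sub>E {..<T} (\<lambda>_. delay_values l). \<exists>t<T. c t = 0}"

lemma finite_normalized_columns: "finite (normalized_columns T l)"
  unfolding normalized_columns_def
  by (rule finite_subset[of _ "Pi\<^sub>E {..<T} (\<lambda>_. delay_values l)"])
     (auto intro: finite_PiE simp: delay_values_def)

lemma card_normalized_columns: "card (normalized_columns T l) = (l + 2) ^ T - (l + 1) ^ T"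
proof -
  let ?A = "delay_values l"
  have "\<infinity> \<notin> enat ` {..l}" by auto
  then have card_A: "card ?A = l + 2"
    unfolding delay_values_def by (auto simp: card_image inj_on_def)
  have "?A - {0} = insert \<infinity> (enat ` {1..l})"
    unfolding delay_values_def by (auto simp: zero_enat_def image_iff)
  moreover have "\<infinity> \<notin> enat ` {1..l}" by auto
  ultimately have card_A0: "card (?A - {0}) = l + 1" by (simp add: card_image inj_on_def)
  have "normalized_columns T l = Pi\<^sub>E {..<T} (\<lambda>_. ?A) - Pi\<^sub>E {..<T} (\<lambda>_. ?A - {0})"
    unfolding normalized_columns_def by (auto simp: PiE_def Pi_def)
  moreover have "Pi\<^sub>E {..<T} (\<lambda>_. ?A - {0}) \<subseteq> Pi\<^sub>E {..<T} (\<lambda>_. ?A)" by auto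
  moreover have "finite (Pi\<^sub>E {..<T} (\<lambda>_. ?A - {0}))"
    by (auto intro: finite_PiE simp: delay_values_def)
  ultimately show ?thesis using card_A card_A0 by (simp add: card_Diff_subset card_PiE)
qed

lemma column_normalization:
  assumes delay: "\<forall>t<T. c t \<in> delay_values l" and finite_entry: "\<exists>t<T. c t \<noteq> \<infinity>"
  obtains c0 m where "c0 \<in> normalized_columns T l" "\<forall>t<T. c t = c0 t + enat m"
proof -
  let ?C = "c ` {..<T}"
  have fin: "finite ?C" and ne: "?C \<noteq> {}" using finite_entry by auto
  obtain t1 where "t1 < T" "c t1 \<noteq> \<infinity>" using finite_entry by blast
  then have "Min ?C \<noteq> \<infinity>" using fin by (metis Min_le enat_ord_simps(5) image_eqI lessThan_iff)
  then obtain m where m: "Min ?C = enat m" by auto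
  obtain t0 where t0: "t0 < T" "c t0 = enat m" using Min_in[OF fin ne] m by auto
  have le: "enat m \<le> c t" if "t < T" for t using Min_le[OF fin] m that by force
  define c0 where "c0 = restrict (\<lambda>t. c t - enat m) {..<T}"
  have shift: "c t = c0 t + enat m" if "t < T" for t
    using le[OF that] that unfolding c0_def by (cases "c t") auto
  have "c0 t \<in> delay_values l" if "t < T" for t
    using delay that unfolding c0_def mem_delay_values by (cases "c t") auto
  moreover have "c0 t0 = 0" using t0 unfolding c0_def by (simp add: zero_enat_def)
  ultimately have "c0 \<in> normalized_columns T l"
    using t0(1) unfolding normalized_columns_def c0_def by auto
  with shift show thesis by (intro that) auto
qed

lemma tropical_code_column_finite:
  assumes "tropical_code T N 1 S" "j < N"
  shows "\<exists>t<T. S t j \<noteq> \<infinity>"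
proof (rule ccontr)
  assume "\<not> ?thesis"
  then have "\<forall>t<T. trop_mult_vec N S (trop_unit j 0) t = trop_mult_vec N S (\<lambda>_. \<infinity>) t"
    using assms(2) by (simp add: trop_mult_vec_unit trop_mult_vec_infty)
  then have "trop_unit j 0 = (\<lambda>_. \<infinity>)"
    using assms trop_unit_in_sparse_vecs infty_in_sparse_vecs unfolding tropical_code_def by blast
  then show False by (metis trop_unit_def fun_upd_same enat.distinct(1))
qed

lemma card_le_normalized_columns_if_tropical_code:
  assumes code: "tropical_code T N 1 S" and delay: "within_delay T N l S"
  shows "N \<le> card (normalized_columns T l)"
proof -
  have "\<exists>c0 m. c0 \<in> normalized_columns T l \<and> (\<forall>t<T. S t j = c0 t + enat m)" if j: "j < N" for j
  proof -
    have "\<forall>t<T. S t j \<in> delay_values l"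
      using delay j by (auto simp: within_delay_def mem_delay_values)
    then obtain c0 m where "c0 \<in> normalized_columns T l" "\<forall>t<T. S t j = c0 t + enat m"
      using tropical_code_column_finite[OF code j] by (rule column_normalization)
    then show ?thesis by blast
  qed
  then obtain f m where f: "\<And>j. j < N \<Longrightarrow> f j \<in> normalized_columns T l"
    and shift: "\<And>j t. j < N \<Longrightarrow> t < T \<Longrightarrow> S t j = f j t + enat (m j)"
    by metis
  have "inj_on f {..<N}"
  proof
    fix j j' assume j: "j \<in> {..<N}" and j': "j' \<in> {..<N}" and same: "f j = f j'"
    have "\<forall>t<T. trop_mult_vec N S (trop_unit j (m j')) t = trop_mult_vec N S (trop_unit j' (m j)) t"
      using j j' same by (simp add: trop_mult_vec_unit shift ac_simps)
    then have "trop_unit j (m j') = trop_unit j' (m j)"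
      using code j j' trop_unit_in_sparse_vecs unfolding tropical_code_def by blast
    then have "trop_unit j (m j') j = trop_unit j' (m j) j" by simp
    then show "j = j'" by (cases "j = j'") (auto simp: trop_unit_def)
  qed
  then have "card {..<N} \<le> card (normalized_columns T l)"
    using f finite_normalized_columns by (intro card_inj_on_le) auto
  then show ?thesis by simp
qed

lemma shifted_columns_eq:
  fixes c c' :: "nat \<Rightarrow> enat"
  assumes "\<exists>t<T. c t = 0" "\<exists>t<T. c' t = 0" and eq: "\<forall>t<T. c t + enat a = c' t + enat a'"
  shows "a = a'" "\<forall>t<T. c t = c' t"
proof -
  obtain t0 t1 where "t0 < T" "c t0 = 0" "t1 < T" "c' t1 = 0" using assms(1,2) by blast
  then have "enat a = c' t0 + enat a'" "c t1 + enat a = enat a'" using eq by auto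
  then show "a = a'" by (cases "c' t0"; cases "c t1") auto
  show "\<forall>t<T. c t = c' t"
  proof (intro allI impI)
    fix t assume "t < T"
    with eq \<open>a = a'\<close> show "c t = c' t" by (cases "c t"; cases "c' t") auto
  qed
qed

lemma tropical_code_of_normalized_columns:
  assumes inj: "inj_on g {..<N}" and cols: "g ` {..<N} \<subseteq> normalized_columns T l" and "N \<ge> 1"
  shows "tropical_code T N 1 (\<lambda>t j. g j t)"
  unfolding tropical_code_def
proof (intro ballI impI)
  let ?out = "\<lambda>x t. trop_mult_vec N (\<lambda>t j. g j t) x t"
  have zero: "\<exists>t<T. g k t = 0" if "k < N" for k using cols that by (auto simp: normalized_columns_def)
  have unit_not_infty: "\<exists>t<T. ?out (trop_unit k a) t \<noteq> ?out (\<lambda>_. \<infinity>) t" if "k < N" for k a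
    using zero[OF that] that \<open>N \<ge> 1\<close> by (auto simp: trop_mult_vec_unit trop_mult_vec_infty)
  have units_distinct: "\<exists>t<T. ?out (trop_unit k a) t \<noteq> ?out (trop_unit k' a') t"
    if "k < N" "k' < N" "trop_unit k a \<noteq> trop_unit k' a'" for k k' a a'
  proof (rule ccontr)
    assume "\<not> ?thesis"
    then have eq: "\<forall>t<T. g k t + enat a = g k' t + enat a'" using that by (simp add: trop_mult_vec_unit)
    then have "\<forall>t<T. g k t = g k' t" and "a = a'"
      using shifted_columns_eq[OF zero zero eq] that by auto
    moreover have "g k \<in> extensional {..<T}" "g k' \<in> extensional {..<T}"
      using cols that by (auto simp: normalized_columns_def PiE_def)
    ultimately have "k = k'" using inj that by (metis extensionalityI inj_onD lessThan_iff)
    with \<open>a = a'\<close> that show False by simp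
  qed
  fix x y assume x: "x \<in> sparse_vecs N 1" and y: "y \<in> sparse_vecs N 1" and "x \<noteq> y"
  show "\<exists>t<T. ?out x t \<noteq> ?out y t"
  proof (cases rule: sparse_vecs_one_cases[OF x])
    case 1
    with y \<open>x \<noteq> y\<close> obtain k a where "k < N" "y = trop_unit k a"
      by (cases rule: sparse_vecs_one_cases) auto
    with 1 unit_not_infty[of k a] show ?thesis by fastforce
  next
    case (2 k a)
    show ?thesis
    proof (cases rule: sparse_vecs_one_cases[OF y])
      case 1
      with 2 unit_not_infty[of k a] show ?thesis by simp
    next
      case (2 k' a')
      with \<open>x = trop_unit k a\<close> \<open>k < N\<close> \<open>x \<noteq> y\<close> units_distinct show ?thesis by simp
    qed
  qed
qed

theorem mainTheorem3:
  fixes T l N :: nat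
  assumes "T \<ge> 1" and "N \<ge> 1"
  shows "(\<exists>S. tropical_code T N 1 S \<and> within_delay T N l S)
           \<longleftrightarrow> N \<le> (l + 2) ^ T - (l + 1) ^ T"
proof
  assume "\<exists>S. tropical_code T N 1 S \<and> within_delay T N l S"
  then show "N \<le> (l + 2) ^ T - (l + 1) ^ T"
    using card_le_normalized_columns_if_tropical_code card_normalized_columns by metis
next
  assume "N \<le> (l + 2) ^ T - (l + 1) ^ T"
  then obtain g where cols: "g ` {..<N} \<subseteq> normalized_columns T l" and inj: "inj_on g {..<N}"
    using card_le_inj[of "{..<N}" "normalized_columns T l"] finite_normalized_columns
      card_normalized_columns by auto
  have "within_delay T N l (\<lambda>t j. g j t)"
    using cols by (auto simp: within_delay_def normalized_columns_def mem_delay_values[symmetric])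
  with tropical_code_of_normalized_columns[OF inj cols \<open>N \<ge> 1\<close>]
  show "\<exists>S. tropical_code T N 1 S \<and> within_delay T N l S" by blast
qed

end
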